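(* Let $X$ be a first-countable Hausdorff topological space and $f:X\to X$ a closed mapping. Suppose there exists $x_0\in X$ such that for each open cover $\mathcal{U}$ of $X$ there are $n\in\mathbb{N}_0$ and $U\in\mathcal{U}$ with $\{f^n(x_0),f^{n+1}(x_0)\}\subseteq U$. Then $f$ has a fixed point.
   Context: A mapping is closed if it maps closed sets to closed sets (continuity is not assumed). $\mathbb{N}_0=\{0,1,2,\dots\}$; $f^n$ is the $n$-fold iterate of $f$, $f^0$ the identity. *)

theory Defs
  imports "HOL-Analysis.Analysis"
begin

end

theory Submission
  imports Defs
begin

(* Suppose f has no fixed point. If every neighbourhood of y contained a consecutive pair
   f^n x0, f^(n+1) x0, first countability would give orbit points a_k with a_k -> y and
   f a_k -> y, f a_k ~= y (only finitely many orbit points are mapped onto y). Since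
   {y} \<union> {a_k} is compact, hence closed, its image under the closed map f is closed and
   contains the limit y of the f a_k, which forces f y = y. So every y has a neighbourhood
   containing no consecutive pair, and these neighbourhoods form an open cover violating
   the hypothesis. *)

lemma finite_range_funpow_or_inj:
  fixes f :: "'a \<Rightarrow> 'a"
  shows "finite (range (\<lambda>n. (f ^^ n) x)) \<or> inj (\<lambda>n. (f ^^ n) x)"
proof (rule disjCI)
  assume "\<not> inj (\<lambda>n. (f ^^ n) x)"
  then obtain i j where ij: "i < j" "(f ^^ i) x = (f ^^ j) x"
    unfolding inj_def by (metis linorder_neqE_nat)
  have "(f ^^ n) x \<in> (\<lambda>n. (f ^^ n) x) ` {..<j}" for n
  proof (induction n rule: less_induct)
    case (less n)
    show ?case
    proof (cases "n < j")
      case False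
      have "n = (n - j) + j"
        using False by simp
      then have "(f ^^ n) x = (f ^^ (n - j)) ((f ^^ j) x)"
        by (metis funpow_add o_apply)
      also have "\<dots> = (f ^^ (n - j + i)) x"
        using ij by (simp add: funpow_add)
      finally show ?thesis
        using less[of "n - j + i"] ij False by auto
    qed auto
  qed
  then show "finite (range (\<lambda>n. (f ^^ n) x))"
    by (meson finite_imageI finite_lessThan finite_subset image_subsetI)
qed

lemma finite_range_funpow_inter_vimage:
  fixes f :: "'a \<Rightarrow> 'a"
  shows "finite (range (\<lambda>n. (f ^^ n) x) \<inter> f -` {y})"
  using finite_range_funpow_or_inj[of f x]
proof
  assume "inj (\<lambda>n. (f ^^ n) x)"
  then have "finite (Suc -` ((\<lambda>n. (f ^^ n) x) -` {y}))"
    by (intro finite_vimageI) auto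
  moreover have "range (\<lambda>n. (f ^^ n) x) \<inter> f -` {y}
      \<subseteq> (\<lambda>n. (f ^^ n) x) ` (Suc -` ((\<lambda>n. (f ^^ n) x) -` {y}))"
    by auto
  ultimately show ?thesis
    using finite_subset by blast
qed (intro finite_Int disjI1)

lemma compact_insert_limit_range:
  fixes a :: "nat \<Rightarrow> 'a::topological_space"
  assumes "a \<longlonglongrightarrow> y"
  shows "compact (insert y (range a))"
proof -
  have "compactin euclidean (insert y (range a))"
    by (rule compactin_sequence_with_limit) (use assms in auto)
  then show ?thesis by simp
qed

lemma closed_map_fixes_common_limit:
  fixes f :: "'a::t2_space \<Rightarrow> 'a"
  assumes closed_map: "\<And>S. closed S \<Longrightarrow> closed (f ` S)"
    and lim: "a \<longlonglongrightarrow> y"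
    and lim_image: "(\<lambda>k. f (a k)) \<longlonglongrightarrow> y"
    and image_ne: "\<And>k. f (a k) \<noteq> y"
  shows "f y = y"
proof -
  have "closed (f ` insert y (range a))"
    by (intro closed_map compact_imp_closed compact_insert_limit_range lim)
  then have "y \<in> f ` insert y (range a)"
    by (rule closed_sequentially) (use lim_image in auto)
  then show ?thesis
    using image_ne by auto
qed

lemma fixed_point_if_orbit_pairs_accumulate:
  fixes f :: "'a::{first_countable_topology, t2_space} \<Rightarrow> 'a"
  assumes closed_map: "\<And>S. closed S \<Longrightarrow> closed (f ` S)"
    and accumulate: "\<And>U. open U \<Longrightarrow> y \<in> U \<Longrightarrow> \<exists>n. {(f ^^ n) x, (f ^^ Suc n) x} \<subseteq> U"
  shows "f y = y"
proof (rule ccontr)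
  assume no_fix: "f y \<noteq> y"
  define F where "F = range (\<lambda>n. (f ^^ n) x) \<inter> f -` {y}"
  have "closed F"
    unfolding F_def by (intro finite_imp_closed finite_range_funpow_inter_vimage)
  have "y \<notin> F"
    using no_fix by (simp add: F_def)
  obtain A :: "nat \<Rightarrow> 'a set" where A: "\<And>k. open (A k)" "\<And>k. y \<in> A k"
    "\<And>b. (\<forall>k. b k \<in> A k) \<Longrightarrow> b \<longlonglongrightarrow> y"
    using first_countable_topology_class.countable_basis by blast
  have "\<exists>n. {(f ^^ n) x, (f ^^ Suc n) x} \<subseteq> A k - F" for k
  proof (rule accumulate)
    show "open (A k - F)"
      using A(1) \<open>closed F\<close> by (rule open_Diff)
    show "y \<in> A k - F"
      using A(2) \<open>y \<notin> F\<close> by blast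
  qed
  then obtain n where n: "\<And>k. {(f ^^ n k) x, (f ^^ Suc (n k)) x} \<subseteq> A k - F"
    by metis
  have "f y = y"
  proof (rule closed_map_fixes_common_limit[OF closed_map])
    show "(\<lambda>k. (f ^^ n k) x) \<longlonglongrightarrow> y"
      using n by (intro A(3)) blast
    show "(\<lambda>k. f ((f ^^ n k) x)) \<longlonglongrightarrow> y"
      using n by (intro A(3)) auto
    show "f ((f ^^ n k) x) \<noteq> y" for k
      using n[of k] by (auto simp: F_def)
  qed
  with no_fix show False ..
qed

theorem theorem6:
  fixes f :: "'a::{first_countable_topology, t2_space} \<Rightarrow> 'a"
    and x0 :: 'a
  assumes closed_map: "\<And>S. closed S \<Longrightarrow> closed (f ` S)"
    and cover: "\<And>\<U>. (\<forall>U\<in>\<U>. open U) \<Longrightarrow> \<Union>\<U> = UNIV \<Longrightarrow>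
                   \<exists>n::nat. \<exists>U\<in>\<U>. {(f ^^ n) x0, (f ^^ Suc n) x0} \<subseteq> U"
  shows "\<exists>x. f x = x"
proof (rule ccontr)
  assume no_fix: "\<not> (\<exists>x. f x = x)"
  have "\<exists>U. open U \<and> y \<in> U \<and> (\<forall>n. \<not> {(f ^^ n) x0, (f ^^ Suc n) x0} \<subseteq> U)" for y
  proof (rule ccontr)
    assume no_nbhd: "\<not> ?thesis"
    have "f y = y"
    proof (rule fixed_point_if_orbit_pairs_accumulate[OF closed_map])
      fix U :: "'a set"
      assume "open U" "y \<in> U"
      then show "\<exists>n. {(f ^^ n) x0, (f ^^ Suc n) x0} \<subseteq> U"
        using no_nbhd by metis
    qed
    with no_fix show False by blast
  qed
  then obtain U where U: "\<And>y. open (U y)" "\<And>y. y \<in> U y"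
    "\<And>y n. \<not> {(f ^^ n) x0, (f ^^ Suc n) x0} \<subseteq> U y"
    by metis
  have "\<exists>n. \<exists>V\<in>range U. {(f ^^ n) x0, (f ^^ Suc n) x0} \<subseteq> V"
    by (rule cover) (use U(1,2) in auto)
  then show False
    using U(3) by blast
qed

end
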